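(* Let $E$ be a finite directed graph and let $A$ be $KE$ or $L_K(E)$ with its standard filtration $\mathcal{F}$. Let $t(A,\mathcal{F})=(\dim(A),\mathrm{GKdim}(A),\mathrm{h}_{\mathrm{alg}}(A))$. Then exactly one of the following holds: (1) $t(A,\mathcal{F})=(k,0,0)$ for some $k<\infty$; (2) $t(A,\mathcal{F})=(\infty,l,0)$ for some $l<\infty$; (3) $t(A,\mathcal{F})=(\infty,\infty,m)$ for some $m<\infty$.
   Context: A finite directed graph $E=(E^0,E^1,s,r)$ has finitely many vertices and edges, with source and range maps $s,r:E^1\to E^0$. Paths are finite sequences $e_1\cdots e_n$ of edges with $r(e_i)=s(e_{i+1})$; vertices are paths of length $0$. The path algebra $KE$ over a field $K$ has basis all paths with concatenation product (zero when not composable); its standard filtration $V_n$ is the span of paths of length $\le n$. The Leavitt path algebra $L_K(E)$ is the $K$-algebra generated by $E^0\cup E^1\cup\{e^*:e\in E^1\}$ subject to: $vw=\delta_{v,w}v$ for vertices; $s(e)e=e=er(e)$ and $r(e)e^*=e^*=e^*s(e)$; $e^*f=\delta_{e,f}r(e)$ for $e,f\in E^1$; $\sum_{s(e)=v}ee^*=v$ for every vertex $v$ with $0<|s^{-1}(v)|<\infty$. Its standard filtration $W_n$ is the span of elements $\lambda\mu^*$ with $\lambda,\mu$ paths and $l(\lambda)+l(\mu)\le n$. For a filtration $\{V_n\}$ of an algebra $A$, $\mathrm{h}_{\mathrm{alg}}(A)=0$ if $A$ is finite-dimensional and $\limsup_n\frac1n\log\dim(V_n/V_{n-1})$ otherwise.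 $\mathrm{GKdim}(A)=\limsup_{n}\log\dim(V^n)/\log n$ for a finite-dimensional generating subspace $V$, where $V^n$ is the span of products of at most $n$ elements of $V$. *)

theory Defs
  imports Complex_Main "HOL-Library.Poly_Mapping" "HOL-Library.Extended_Nat"
    "HOL-Library.Extended_Real" "Graph_Theory.Digraph"
begin

definition pm_scale :: "'k::field \<Rightarrow> ('w \<Rightarrow>\<^sub>0 'k) \<Rightarrow> ('w \<Rightarrow>\<^sub>0 'k)" where
  "pm_scale c p = Poly_Mapping.map (\<lambda>x. c * x) p"

abbreviation pspan :: "('w \<Rightarrow>\<^sub>0 'k::field) set \<Rightarrow> ('w \<Rightarrow>\<^sub>0 'k) set" where
  "pspan S \<equiv> module.span pm_scale S"

text \<open>Bilinear extension of a partial product on basis elements.\<close>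
definition pm_mult :: "('w \<Rightarrow> 'w \<Rightarrow> 'w option) \<Rightarrow> ('w \<Rightarrow>\<^sub>0 'k::field) \<Rightarrow> ('w \<Rightarrow>\<^sub>0 'k) \<Rightarrow> ('w \<Rightarrow>\<^sub>0 'k)" where
  "pm_mult m p q = (\<Sum>u\<in>Poly_Mapping.keys p. \<Sum>w\<in>Poly_Mapping.keys q.
      (case m u w of None \<Rightarrow> 0 | Some z \<Rightarrow> Poly_Mapping.single z (Poly_Mapping.lookup p u * Poly_Mapping.lookup q w)))"

text \<open>Dimension of the image of a set S in the quotient of the ambient space by a subspace M,
  i.e. the dimension of (span S + M)/M: the least cardinality of a finite subset of S whose
  span together with M covers S (infinity if there is none).\<close>
definition qdim :: "('w \<Rightarrow>\<^sub>0 'k::field) set \<Rightarrow> ('w \<Rightarrow>\<^sub>0 'k) set \<Rightarrow> enat" where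
  "qdim M S = (if \<exists>B. finite B \<and> B \<subseteq> S \<and> S \<subseteq> {b + x | b x. b \<in> pspan B \<and> x \<in> M}
     then enat (LEAST n. \<exists>B. finite B \<and> card B = n \<and> B \<subseteq> S \<and> S \<subseteq> {b + x | b x. b \<in> pspan B \<and> x \<in> M})
     else \<infinity>)"

text \<open>Logarithm of a dimension; log 0 is taken to be 0 (as Isabelle's ln does).\<close>
definition logdim :: "enat \<Rightarrow> ereal" where
  "logdim d = (case d of enat k \<Rightarrow> ereal (ln (real k)) | \<infinity> \<Rightarrow> \<infinity>)"

definition prods_upto :: "('a \<Rightarrow> 'a \<Rightarrow> 'a) \<Rightarrow> 'a set \<Rightarrow> nat \<Rightarrow> 'a set" where
  "prods_upto mult V n = {foldl mult (hd xs) (tl xs) | xs. xs \<noteq> [] \<and> length xs \<le> n \<and> set xs \<subseteq> V}"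

text \<open>The algebra A is the quotient C/I where C is a subspace (the carrier, closed under mult)
  of the ambient free vector space and I is an ideal of C; F n is a subspace of C whose
  image in A is the n-th filtration piece. (For the path algebra, I = {0}.)\<close>

definition alg_dim :: "('w \<Rightarrow>\<^sub>0 'k::field) set \<Rightarrow> ('w \<Rightarrow>\<^sub>0 'k) set \<Rightarrow> enat" where
  "alg_dim I C = qdim I C"

definition filt_prev :: "(nat \<Rightarrow> ('w \<Rightarrow>\<^sub>0 'k::field) set) \<Rightarrow> nat \<Rightarrow> ('w \<Rightarrow>\<^sub>0 'k) set" where
  "filt_prev F n = (if n = 0 then {0} else F (n - 1))"

text \<open>dim(F_n / F_(n-1)) computed inside A = C/I.\<close>
definition graded_dim :: "('w \<Rightarrow>\<^sub>0 'k::field) set \<Rightarrow> (nat \<Rightarrow> ('w \<Rightarrow>\<^sub>0 'k) set) \<Rightarrow> nat \<Rightarrow> enat" where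
  "graded_dim I F n = qdim (pspan (filt_prev F n \<union> I)) (F n)"

definition h_alg :: "('w \<Rightarrow>\<^sub>0 'k::field) set \<Rightarrow> ('w \<Rightarrow>\<^sub>0 'k) set \<Rightarrow> (nat \<Rightarrow> ('w \<Rightarrow>\<^sub>0 'k) set) \<Rightarrow> ereal" where
  "h_alg I C F = (if alg_dim I C \<noteq> \<infinity> then 0
     else limsup (\<lambda>n. logdim (graded_dim I F n) / ereal (real n)))"

text \<open>GK dimension computed with the finite-dimensional generating subspace V = F 1.\<close>
definition gk_dim :: "(('w \<Rightarrow>\<^sub>0 'k::field) \<Rightarrow> ('w \<Rightarrow>\<^sub>0 'k) \<Rightarrow> ('w \<Rightarrow>\<^sub>0 'k))
    \<Rightarrow> ('w \<Rightarrow>\<^sub>0 'k) set \<Rightarrow> ('w \<Rightarrow>\<^sub>0 'k) set \<Rightarrow> ereal" where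
  "gk_dim mult I V = limsup (\<lambda>n. logdim (qdim I (pspan (prods_upto mult V n))) / ereal (ln (real n)))"

definition alg_type :: "(('w \<Rightarrow>\<^sub>0 'k::field) \<Rightarrow> ('w \<Rightarrow>\<^sub>0 'k) \<Rightarrow> ('w \<Rightarrow>\<^sub>0 'k))
    \<Rightarrow> ('w \<Rightarrow>\<^sub>0 'k) set \<Rightarrow> ('w \<Rightarrow>\<^sub>0 'k) set \<Rightarrow> (nat \<Rightarrow> ('w \<Rightarrow>\<^sub>0 'k) set)
    \<Rightarrow> enat \<times> ereal \<times> ereal" where
  "alg_type mult I C F = (alg_dim I C, gk_dim mult I (F 1), h_alg I C F)"

text \<open>A path is encoded as (start vertex, list of edges); (v,[]) is the vertex v.\<close>
type_synonym ('v,'e) path = "'v \<times> 'e list"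

fun edges_chain :: "('v,'e) pre_digraph \<Rightarrow> 'v \<Rightarrow> 'e list \<Rightarrow> bool" where
  "edges_chain G v [] = True"
| "edges_chain G v (e # es) = (e \<in> arcs G \<and> tail G e = v \<and> edges_chain G (head G e) es)"

definition is_path :: "('v,'e) pre_digraph \<Rightarrow> ('v,'e) path \<Rightarrow> bool" where
  "is_path G p = (fst p \<in> verts G \<and> edges_chain G (fst p) (snd p))"

definition path_len :: "('v,'e) path \<Rightarrow> nat" where
  "path_len p = length (snd p)"

definition path_end :: "('v,'e) pre_digraph \<Rightarrow> ('v,'e) path \<Rightarrow> 'v" where
  "path_end G p = (if snd p = [] then fst p else head G (last (snd p)))"

definition path_cat :: "('v,'e) pre_digraph \<Rightarrow> ('v,'e) path \<Rightarrow> ('v,'e) path \<Rightarrow> ('v,'e) path option" where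
  "path_cat G p q = (if is_path G p \<and> is_path G q \<and> path_end G p = fst q
     then Some (fst p, snd p @ snd q) else None)"

definition KE_mult :: "('v,'e) pre_digraph \<Rightarrow> (('v,'e) path \<Rightarrow>\<^sub>0 'k::field) \<Rightarrow> _ \<Rightarrow> _" where
  "KE_mult G = pm_mult (path_cat G)"

definition KE_carrier :: "('v,'e) pre_digraph \<Rightarrow> (('v,'e) path \<Rightarrow>\<^sub>0 'k::field) set" where
  "KE_carrier G = pspan {Poly_Mapping.single p 1 | p. is_path G p}"

definition KE_filt :: "('v,'e) pre_digraph \<Rightarrow> nat \<Rightarrow> (('v,'e) path \<Rightarrow>\<^sub>0 'k::field) set" where
  "KE_filt G n = pspan {Poly_Mapping.single p 1 | p. is_path G p \<and> path_len p \<le> n}"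

definition path_alg_type :: "'k::field itself \<Rightarrow> ('v,'e) pre_digraph \<Rightarrow> enat \<times> ereal \<times> ereal" where
  "path_alg_type K G = alg_type (KE_mult G) ({0} :: (('v,'e) path \<Rightarrow>\<^sub>0 'k) set)
      (KE_carrier G) (KE_filt G)"

datatype ('v,'e) gen = GV 'v | GE 'e | GG 'e  \<comment> \<open>vertex, edge e, ghost edge e*\<close>

definition valid_gen :: "('v,'e) pre_digraph \<Rightarrow> ('v,'e) gen \<Rightarrow> bool" where
  "valid_gen G g = (case g of GV v \<Rightarrow> v \<in> verts G | GE e \<Rightarrow> e \<in> arcs G | GG e \<Rightarrow> e \<in> arcs G)"

definition FA_mult :: "(('v,'e) gen list \<Rightarrow>\<^sub>0 'k::field) \<Rightarrow> _ \<Rightarrow> _" where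
  "FA_mult = pm_mult (\<lambda>u w. Some (u @ w))"

definition wd :: "('v,'e) gen list \<Rightarrow> (('v,'e) gen list \<Rightarrow>\<^sub>0 'k::field)" where
  "wd w = Poly_Mapping.single w 1"

definition FA_carrier :: "('v,'e) pre_digraph \<Rightarrow> (('v,'e) gen list \<Rightarrow>\<^sub>0 'k::field) set" where
  "FA_carrier G = pspan {wd w | w. w \<noteq> [] \<and> (\<forall>g\<in>set w. valid_gen G g)}"

text \<open>The Leavitt relations, each element r standing for the relation r = 0.\<close>
definition LPA_rels :: "('v,'e) pre_digraph \<Rightarrow> (('v,'e) gen list \<Rightarrow>\<^sub>0 'k::field) set" where
  "LPA_rels G =
     {wd [GV v, GV w] - (if v = w then wd [GV v] else 0) | v w. v \<in> verts G \<and> w \<in> verts G}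
   \<union> {wd [GV (tail G e), GE e] - wd [GE e] | e. e \<in> arcs G}
   \<union> {wd [GE e, GV (head G e)] - wd [GE e] | e. e \<in> arcs G}
   \<union> {wd [GV (head G e), GG e] - wd [GG e] | e. e \<in> arcs G}
   \<union> {wd [GG e, GV (tail G e)] - wd [GG e] | e. e \<in> arcs G}
   \<union> {wd [GG e, GE f] - (if e = f then wd [GV (head G e)] else 0) | e f. e \<in> arcs G \<and> f \<in> arcs G}
   \<union> {(\<Sum>e\<in>{e \<in> arcs G. tail G e = v}. wd [GE e, GG e]) - wd [GV v] | v.
        v \<in> verts G \<and> 0 < card {e \<in> arcs G. tail G e = v} \<and> finite {e \<in> arcs G. tail G e = v}}"

definition LPA_ideal :: "('v,'e) pre_digraph \<Rightarrow> (('v,'e) gen list \<Rightarrow>\<^sub>0 'k::field) set" where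
  "LPA_ideal G = pspan {FA_mult (FA_mult (wd u) r) (wd w) | u r w.
      (\<forall>g\<in>set u. valid_gen G g) \<and> (\<forall>g\<in>set w. valid_gen G g) \<and> r \<in> LPA_rels G}"

text \<open>Words for lambda and mu* (a vertex path v gives the vertex v in both cases).\<close>
definition path_word :: "('v,'e) path \<Rightarrow> ('v,'e) gen list" where
  "path_word p = (if snd p = [] then [GV (fst p)] else map GE (snd p))"

definition ghost_word :: "('v,'e) path \<Rightarrow> ('v,'e) gen list" where
  "ghost_word p = (if snd p = [] then [GV (fst p)] else map GG (rev (snd p)))"

definition LPA_filt :: "('v,'e) pre_digraph \<Rightarrow> nat \<Rightarrow> (('v,'e) gen list \<Rightarrow>\<^sub>0 'k::field) set" where
  "LPA_filt G n = pspan {FA_mult (wd (path_word p)) (wd (ghost_word q)) | p q.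
      is_path G p \<and> is_path G q \<and> path_len p + path_len q \<le> n}"

definition leavitt_type :: "'k::field itself \<Rightarrow> ('v,'e) pre_digraph \<Rightarrow> enat \<times> ereal \<times> ereal" where
  "leavitt_type K G = alg_type FA_mult (LPA_ideal G :: (('v,'e) gen list \<Rightarrow>\<^sub>0 'k) set)
      (FA_carrier G) (LPA_filt G)"

definition exactly_one3 :: "bool \<Rightarrow> bool \<Rightarrow> bool \<Rightarrow> bool" where
  "exactly_one3 P Q R = ((P \<and> \<not> Q \<and> \<not> R) \<or> (\<not> P \<and> Q \<and> \<not> R) \<or> (\<not> P \<and> \<not> Q \<and> R))"

end

theory Submission
  imports Defs "HOL-Real_Asymp.Real_Asymp"
begin

text \<open>Both algebras are presented as a quotient C/I of a space of formal linear combinations,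
  with a filtration whose n-th piece F_n is spanned by at most c * beta^n elements (the paths,
  resp. the monomials lambda mu*, of length at most n) and lies in (F_1)^n + I. If A is
  finite-dimensional, dim (F_1)^n is bounded, so GKdim A = 0, while h_alg A = 0 by definition.
  Otherwise h_alg A = limsup log dim(F_n/F_(n-1)) / n lies in [0, log c + log beta]; if it is
  positive, then dim (F_1)^n >= dim(F_n/F_(n-1)) grows exponentially along a subsequence, which
  forces GKdim A = infinity. The three shapes of the triple differ in their first two entries, so
  exactly one of them occurs.\<close>

section \<open>Growth of dimension sequences\<close>

lemma less_LimsupD:
  fixes f :: "_ \<Rightarrow> 'a::complete_linorder"
  assumes "y < Limsup F f"
  shows "\<exists>\<^sub>F x in F. y < f x"
proof (rule ccontr)
  assume "\<not> (\<exists>\<^sub>F x in F. y < f x)"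
  then have "Limsup F f \<le> y" by (intro Limsup_bounded) (simp add: not_frequently not_less)
  with assms show False by simp
qed

lemma ln_of_nat_nonneg: "0 \<le> ln (real j)"
  by (cases "j = 0") auto

lemma ln_of_nat_mono: "j \<le> k \<Longrightarrow> ln (real j) \<le> ln (real k)"
  by (cases "j = 0") (simp_all add: ln_of_nat_nonneg)

lemma logdim_enat: "logdim (enat j) = ereal (ln (real j))"
  by (simp add: logdim_def)

lemma logdim_nonneg: "0 \<le> logdim d"
  by (cases d) (simp_all add: logdim_def ln_of_nat_nonneg)

lemma logdim_mono:
  assumes "d \<le> d'"
  shows "logdim d \<le> logdim d'"
proof (cases d')
  case (enat j')
  with assms obtain j where "d = enat j" "j \<le> j'" by (cases d) auto
  then show ?thesis using enat by (simp add: logdim_def ln_of_nat_mono)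
qed (simp add: logdim_def)

lemma limsup_logdim_over_ln_nonneg:
  "0 \<le> limsup (\<lambda>n. logdim (d n) / ereal (ln (real n)))"
  by (rule le_Limsup)
     (auto intro: eventually_mono[OF eventually_gt_at_top[of 1]] simp: logdim_nonneg)

lemma limsup_logdim_over_ln_bounded:
  assumes "\<And>n. d n \<le> enat k"
  shows "limsup (\<lambda>n. logdim (d n) / ereal (ln (real n))) = 0"
proof (rule antisym)
  have "\<forall>\<^sub>F n in sequentially. logdim (d n) / ereal (ln (real n)) \<le> ereal (ln (real k) / ln (real n))"
    using eventually_gt_at_top[of 1]
  proof eventually_elim
    case (elim n)
    obtain j where "d n = enat j" "j \<le> k" using assms[of n] by (cases "d n") auto
    then show ?case using elim by (simp add: logdim_enat divide_right_mono ln_of_nat_mono)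
  qed
  then have "limsup (\<lambda>n. logdim (d n) / ereal (ln (real n)))
      \<le> limsup (\<lambda>n. ereal (ln (real k) / ln (real n)))"
    by (rule Limsup_mono)
  also have "\<dots> = 0"
    by (rule lim_imp_Limsup) (simp_all add: zero_ereal_def, real_asymp)
  finally show "limsup (\<lambda>n. logdim (d n) / ereal (ln (real n))) \<le> 0" .
qed (rule limsup_logdim_over_ln_nonneg)

lemma limsup_logdim_over_n_finite:
  assumes bound: "\<And>n. d n \<le> enat (c * \<beta> ^ n)" and "1 \<le> c" "1 \<le> \<beta>"
  shows "\<exists>r \<ge> 0. limsup (\<lambda>n. logdim (d n) / ereal (real n)) = ereal r"
proof -
  let ?h = "limsup (\<lambda>n. logdim (d n) / ereal (real n))"
  have lnc: "0 \<le> ln (real c)" using assms(2) by simp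
  have "\<forall>\<^sub>F n in sequentially. logdim (d n) / ereal (real n) \<le> ereal (ln (real c) + ln (real \<beta>))"
    using eventually_ge_at_top[of 1]
  proof eventually_elim
    case (elim n)
    obtain j where j: "d n = enat j" "j \<le> c * \<beta> ^ n" using bound[of n] by (cases "d n") auto
    have "ln (real j) \<le> ln (real (c * \<beta> ^ n))" using j(2) by (rule ln_of_nat_mono)
    also have "\<dots> = ln (real c) + real n * ln (real \<beta>)"
      using assms(2,3) by (simp add: ln_mult ln_realpow)
    also have "\<dots> \<le> (ln (real c) + ln (real \<beta>)) * real n"
      using mult_left_mono[OF _ lnc, of 1 "real n"] elim by (simp add: algebra_simps)
    finally show ?case using elim j(1) by (simp add: logdim_enat divide_le_eq)
  qed
  then have "?h \<le> ereal (ln (real c) + ln (real \<beta>))" by (rule Limsup_bounded)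
  moreover have "0 \<le> ?h"
    by (rule le_Limsup) (simp_all add: logdim_nonneg)
  ultimately show ?thesis by (cases ?h) auto
qed

text \<open>Exponential growth of g along a subsequence passes to d and beats every power of n,
  since n / ln n tends to infinity.\<close>
lemma limsup_logdim_over_ln_infinite:
  assumes le: "\<And>n. 1 \<le> n \<Longrightarrow> g n \<le> d n"
    and pos: "0 < limsup (\<lambda>n. logdim (g n) / ereal (real n))"
  shows "limsup (\<lambda>n. logdim (d n) / ereal (ln (real n))) = \<infinity>"
proof (rule ccontr)
  assume "limsup (\<lambda>n. logdim (d n) / ereal (ln (real n))) \<noteq> \<infinity>"
  then obtain M where "limsup (\<lambda>n. logdim (d n) / ereal (ln (real n))) < ereal M"
    by (metis less_PInf_Ex_of_nat)
  then have small: "\<forall>\<^sub>F n in sequentially. logdim (d n) / ereal (ln (real n)) < ereal M"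
    by (rule Limsup_lessD)
  obtain \<epsilon> where \<epsilon>: "0 < \<epsilon>" "ereal \<epsilon> < limsup (\<lambda>n. logdim (g n) / ereal (real n))"
    using ereal_dense2[OF pos] by (auto simp: zero_ereal_def)
  then have big: "\<exists>\<^sub>F n in sequentially. ereal \<epsilon> < logdim (g n) / ereal (real n)"
    by (intro less_LimsupD) simp
  have "filterlim (\<lambda>n. real n / ln (real n)) at_top sequentially" by real_asymp
  then have large: "\<forall>\<^sub>F n in sequentially. M / \<epsilon> \<le> real n / ln (real n)"
    by (simp add: filterlim_at_top)
  from big obtain n where n: "ereal \<epsilon> < logdim (g n) / ereal (real n)"
    "logdim (d n) / ereal (ln (real n)) < ereal M" "M / \<epsilon> \<le> real n / ln (real n)" "2 \<le> n"
    using frequently_eventually_frequently[OF big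
        eventually_conj[OF small eventually_conj[OF large eventually_ge_at_top[of 2]]]]
    by (auto dest: frequently_ex)
  have ln_pos: "0 < ln (real n)" using n(4) by simp
  have "ereal (\<epsilon> * real n) < logdim (g n)"
    using n(1,4) by (simp add: ereal_less_divide_iff mult.commute)
  also have "\<dots> \<le> logdim (d n)" using le n(4) by (simp add: logdim_mono)
  also have "\<dots> < ereal (M * ln (real n))"
    using n(2) ln_pos by (simp add: ereal_divide_less_iff mult.commute)
  finally have "\<epsilon> * real n < M * ln (real n)" by simp
  with n(3) \<epsilon>(1) ln_pos show False by (simp add: field_simps)
qed

section \<open>Dimension modulo a subspace\<close>

lemma lookup_pm_scale [simp]: "Poly_Mapping.lookup (pm_scale c p) k = c * Poly_Mapping.lookup p k"
  by (simp add: pm_scale_def map.rep_eq when_def)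

interpretation pm: vector_space "pm_scale :: 'k::field \<Rightarrow> ('w \<Rightarrow>\<^sub>0 'k) \<Rightarrow> _"
  by unfold_locales (auto intro!: poly_mapping_eqI simp: lookup_add algebra_simps)

definition span_plus :: "('w \<Rightarrow>\<^sub>0 'k::field) set \<Rightarrow> ('w \<Rightarrow>\<^sub>0 'k) set \<Rightarrow> ('w \<Rightarrow>\<^sub>0 'k) set" where
  "span_plus B M = {b + x | b x. b \<in> pspan B \<and> x \<in> M}"

lemma qdim_span_plus:
  "qdim M S = (if \<exists>B. finite B \<and> B \<subseteq> S \<and> S \<subseteq> span_plus B M
     then enat (LEAST n. \<exists>B. finite B \<and> card B = n \<and> B \<subseteq> S \<and> S \<subseteq> span_plus B M)
     else \<infinity>)"
  by (simp only: qdim_def span_plus_def)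

lemma subspace_span_plus:
  assumes "pm.subspace M"
  shows "pm.subspace (span_plus B M)"
  using pm.subspace_sums[OF pm.subspace_span assms] by (simp add: span_plus_def)

lemma span_plus_span [simp]: "span_plus (pspan B) M = span_plus B M"
  by (simp add: span_plus_def pm.span_span)

lemma subset_span_plus: "pm.subspace M \<Longrightarrow> S \<subseteq> span_plus S M"
  unfolding span_plus_def using pm.span_base pm.subspace_0 by force

lemma span_plus_subset:
  assumes "pm.subspace M" "S \<subseteq> span_plus B M"
  shows "span_plus S M \<subseteq> span_plus B M"
proof -
  have "pspan S \<subseteq> span_plus B M"
    using assms by (intro pm.span_minimal subspace_span_plus)
  moreover have "M \<subseteq> span_plus B M"
    unfolding span_plus_def using pm.span_zero by force
  ultimately show ?thesis
    using pm.subspace_add[OF subspace_span_plus[OF assms(1)]] unfolding span_plus_def[of S]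
    by blast
qed

definition indep_mod :: "('w \<Rightarrow>\<^sub>0 'k::field) set \<Rightarrow> ('w \<Rightarrow>\<^sub>0 'k) set \<Rightarrow> bool" where
  "indep_mod M A \<longleftrightarrow> (\<forall>c. (\<Sum>a\<in>A. pm_scale (c a) a) \<in> M \<longrightarrow> (\<forall>a\<in>A. c a = 0))"

text \<open>Replacing each element a of A by a representative of a + M in span B gives an
  independent subset of span B.\<close>
lemma card_le_if_indep_mod:
  fixes M :: "('w \<Rightarrow>\<^sub>0 'k::field) set"
  assumes M: "pm.subspace M" and "finite B" "finite A" "A \<subseteq> span_plus B M" "indep_mod M A"
  shows "card A \<le> card B"
proof -
  have "\<forall>a\<in>A. \<exists>b. b \<in> pspan B \<and> a - b \<in> M" using assms(4) by (force simp: span_plus_def)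
  then obtain \<beta> where \<beta>: "\<And>a. a \<in> A \<Longrightarrow> \<beta> a \<in> pspan B \<and> a - \<beta> a \<in> M" by metis
  have zero: "\<forall>a\<in>A. c a = 0" if "(\<Sum>a\<in>A. pm_scale (c a) (\<beta> a)) = 0" for c
  proof -
    have "(\<Sum>a\<in>A. pm_scale (c a) a)
        = (\<Sum>a\<in>A. pm_scale (c a) (\<beta> a)) + (\<Sum>a\<in>A. pm_scale (c a) (a - \<beta> a))"
      by (simp add: sum.distrib[symmetric] pm.scale_right_diff_distrib)
    also have "\<dots> \<in> M"
      using that \<beta> M by (auto intro!: pm.subspace_sum pm.subspace_scale)
    finally show ?thesis using \<open>indep_mod M A\<close> by (simp add: indep_mod_def)
  qed
  have inj: "inj_on \<beta> A"
  proof (rule inj_onI, rule ccontr)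
    fix a a' assume aa: "a \<in> A" "a' \<in> A" "\<beta> a = \<beta> a'" "a \<noteq> a'"
    define c where "c x = (if x = a then 1 else if x = a' then -1 else (0::'k))" for x
    have "(\<Sum>x\<in>A. pm_scale (c x) (\<beta> x)) = (\<Sum>x\<in>{a, a'}. pm_scale (c x) (\<beta> x))"
      using aa \<open>finite A\<close> by (intro sum.mono_neutral_right) (auto simp: c_def)
    also have "\<dots> = 0" using aa by (simp add: c_def pm.scale_left_distrib[symmetric])
    finally show False using zero aa by (force simp: c_def)
  qed
  have "pm.independent (\<beta> ` A)"
  proof (rule pm.independent_if_scalars_zero)
    fix f x assume "(\<Sum>x\<in>\<beta> ` A. pm_scale (f x) x) = 0" "x \<in> \<beta> ` A"
    then show "f x = 0" using zero[of "f \<circ> \<beta>"] by (auto simp: sum.reindex[OF inj])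
  qed (use \<open>finite A\<close> in simp)
  then have "card (\<beta> ` A) \<le> card B"
    using pm.independent_span_bound[OF \<open>finite B\<close>] \<beta> by auto
  then show ?thesis using card_image[OF inj] by simp
qed

lemma indep_mod_insert:
  assumes M: "pm.subspace M" and A: "finite A" "indep_mod M A" and s: "s \<notin> span_plus A M"
  shows "indep_mod M (insert s A)"
  unfolding indep_mod_def
proof (intro allI impI)
  fix c assume cM: "(\<Sum>a\<in>insert s A. pm_scale (c a) a) \<in> M"
  have "s \<notin> A" using s subset_span_plus[OF M] by blast
  then have sum_eq: "(\<Sum>a\<in>insert s A. pm_scale (c a) a) = pm_scale (c s) s + (\<Sum>a\<in>A. pm_scale (c a) a)"
    using A by simp
  have "c s = 0"
  proof (rule ccontr)
    assume cs: "c s \<noteq> 0"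
    have "s = pm_scale (- inverse (c s)) (\<Sum>a\<in>A. pm_scale (c a) a)
        + pm_scale (inverse (c s)) (\<Sum>a\<in>insert s A. pm_scale (c a) a)"
      using cs unfolding sum_eq by (simp add: pm.scale_right_distrib)
    moreover have "pm_scale (- inverse (c s)) (\<Sum>a\<in>A. pm_scale (c a) a) \<in> pspan A"
      by (intro pm.span_scale pm.span_sum pm.span_base) auto
    moreover have "pm_scale (inverse (c s)) (\<Sum>a\<in>insert s A. pm_scale (c a) a) \<in> M"
      using cM M pm.subspace_scale by blast
    ultimately show False using s unfolding span_plus_def by blast
  qed
  then show "\<forall>a\<in>insert s A. c a = 0"
    using cM A(2) by (simp add: sum_eq indep_mod_def)
qed

text \<open>A subset of S independent modulo M of maximal size spans S modulo M.\<close>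
lemma exists_indep_mod_spanning:
  fixes M :: "('w \<Rightarrow>\<^sub>0 'k::field) set"
  assumes M: "pm.subspace M" and "finite B" "S \<subseteq> span_plus B M"
  obtains A where "finite A" "card A \<le> card B" "A \<subseteq> S" "S \<subseteq> span_plus A M"
proof -
  define good where "good A \<longleftrightarrow> finite A \<and> A \<subseteq> S \<and> indep_mod M A" for A
  have bounded: "card A \<le> card B" if "good A" for A
  proof -
    from that have A: "finite A" "A \<subseteq> S" "indep_mod M A" by (simp_all add: good_def)
    show ?thesis
      by (rule card_le_if_indep_mod[OF M assms(2) A(1) order_trans[OF A(2) assms(3)] A(3)])
  qed
  let ?sizes = "card ` Collect good"
  have "?sizes \<subseteq> {..card B}" using bounded by (simp add: image_subset_iff)
  then have "finite ?sizes" by (rule finite_subset) simp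
  moreover have "good {}" by (simp add: good_def indep_mod_def)
  ultimately have "Max ?sizes \<in> ?sizes" by (intro Max_in) auto
  then obtain A where "A \<in> Collect good" and A_max: "Max ?sizes = card A" by (rule imageE)
  then have A: "good A" by simp
  have maximal: "card A' \<le> card A" if "good A'" for A'
    using Max_ge[OF \<open>finite ?sizes\<close>, of "card A'"] that A_max by simp
  have "S \<subseteq> span_plus A M"
  proof
    fix s assume "s \<in> S"
    show "s \<in> span_plus A M"
    proof (rule ccontr)
      assume s: "s \<notin> span_plus A M"
      then have "s \<notin> A" using subset_span_plus[OF M] by blast
      have "good (insert s A)"
        using A \<open>s \<in> S\<close> indep_mod_insert[OF M _ _ s] by (simp add: good_def)
      then show False using maximal[of "insert s A"] A \<open>s \<notin> A\<close> by (simp add: good_def)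
    qed
  qed
  with A bounded[OF A] show ?thesis by (intro that) (simp_all add: good_def)
qed

lemma qdim_eq_Least:
  assumes "\<exists>B. finite B \<and> B \<subseteq> S \<and> S \<subseteq> span_plus B M"
  shows "qdim M S = enat (LEAST n. \<exists>B. finite B \<and> card B = n \<and> B \<subseteq> S \<and> S \<subseteq> span_plus B M)"
  by (simp only: qdim_span_plus if_P[OF assms])

lemma qdim_le_card:
  assumes "finite B" "B \<subseteq> S" "S \<subseteq> span_plus B M"
  shows "qdim M S \<le> enat (card B)"
proof -
  have "(LEAST n. \<exists>B. finite B \<and> card B = n \<and> B \<subseteq> S \<and> S \<subseteq> span_plus B M) \<le> card B"
    using assms by (intro Least_le) blast
  moreover have "\<exists>B. finite B \<and> B \<subseteq> S \<and> S \<subseteq> span_plus B M" using assms by blast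
  ultimately show ?thesis by (simp only: qdim_eq_Least enat_ord_simps)
qed

lemma qdim_witness:
  assumes "qdim M S \<noteq> \<infinity>"
  obtains B where "finite B" "B \<subseteq> S" "S \<subseteq> span_plus B M" "qdim M S = enat (card B)"
proof -
  let ?P = "\<lambda>n. \<exists>B. finite B \<and> card B = n \<and> B \<subseteq> S \<and> S \<subseteq> span_plus B M"
  have ex: "\<exists>B. finite B \<and> B \<subseteq> S \<and> S \<subseteq> span_plus B M"
    using assms unfolding qdim_span_plus by metis
  then have "\<exists>n. ?P n" by blast
  then have "?P (LEAST n. ?P n)" by (rule LeastI_ex)
  then obtain B where B: "finite B" "B \<subseteq> S" "S \<subseteq> span_plus B M"
    and least: "card B = (LEAST n. ?P n)"
    by blast
  show ?thesis using qdim_eq_Least[OF ex] unfolding least[symmetric] by (rule that[OF B])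
qed

lemma qdim_mono:
  assumes M: "pm.subspace M" and S: "S \<subseteq> span_plus T M"
  shows "qdim M S \<le> qdim M T"
proof (cases "qdim M T = \<infinity>")
  case False
  then obtain B where B: "finite B" "T \<subseteq> span_plus B M" "qdim M T = enat (card B)"
    by (rule qdim_witness)
  have "S \<subseteq> span_plus B M" using S span_plus_subset[OF M B(2)] by blast
  then obtain A where "finite A" "card A \<le> card B" "A \<subseteq> S" "S \<subseteq> span_plus A M"
    using exists_indep_mod_spanning[OF M B(1)] by blast
  then show ?thesis using qdim_le_card[of A S M] B(3) by (simp add: order_trans)
qed simp

lemma qdim_span_le_card:
  assumes "finite X" "pm.subspace M"
  shows "qdim M (pspan X) \<le> enat (card X)"
proof (rule qdim_le_card)
  show "pspan X \<subseteq> span_plus X M"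
    using subset_span_plus[OF assms(2), of "pspan X"] by simp
qed (use assms pm.span_superset in auto)

lemma qdim_antimono:
  assumes "M \<subseteq> M'"
  shows "qdim M' S \<le> qdim M S"
proof (cases "qdim M S = \<infinity>")
  case False
  then obtain B where "finite B" "B \<subseteq> S" "S \<subseteq> span_plus B M" "qdim M S = enat (card B)"
    by (rule qdim_witness)
  moreover from this(3) have "S \<subseteq> span_plus B M'"
    using assms unfolding span_plus_def by blast
  ultimately show ?thesis using qdim_le_card[of B S M'] by simp
qed simp

section \<open>Filtrations of exponential growth\<close>

locale exp_bounded_filtration =
  fixes mult :: "('w \<Rightarrow>\<^sub>0 'k::field) \<Rightarrow> ('w \<Rightarrow>\<^sub>0 'k) \<Rightarrow> ('w \<Rightarrow>\<^sub>0 'k)"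
    and I C :: "('w \<Rightarrow>\<^sub>0 'k) set" and F X :: "nat \<Rightarrow> ('w \<Rightarrow>\<^sub>0 'k) set" and c \<beta> :: nat
  assumes subspace_I: "pm.subspace I" and subspace_C: "pm.subspace C"
    and F_eq_span: "F n = pspan (X n)" and finite_X: "finite (X n)"
    and card_X_le: "card (X n) \<le> c * \<beta> ^ n" and one_le_c: "1 \<le> c" and one_le_\<beta>: "1 \<le> \<beta>"
    and prods_subset_C: "prods_upto mult (F 1) n \<subseteq> C"
    and F_subset_prods: "1 \<le> n \<Longrightarrow> F n \<subseteq> span_plus (prods_upto mult (F 1) n) I"
begin

abbreviation growth :: "nat \<Rightarrow> enat" where
  "growth n \<equiv> qdim I (pspan (prods_upto mult (F 1) n))"

lemma graded_dim_le_qdim: "graded_dim I F n \<le> qdim I (F n)"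
  unfolding graded_dim_def by (rule qdim_antimono) (use pm.span_superset in blast)

lemma graded_dim_le_exp: "graded_dim I F n \<le> enat (c * \<beta> ^ n)"
proof -
  have "qdim I (F n) \<le> enat (card (X n))"
    unfolding F_eq_span by (rule qdim_span_le_card[OF finite_X subspace_I])
  then show ?thesis using graded_dim_le_qdim[of n] card_X_le[of n] by (simp add: order_trans)
qed

lemma graded_dim_le_growth:
  assumes "1 \<le> n"
  shows "graded_dim I F n \<le> growth n"
proof -
  have "qdim I (F n) \<le> growth n"
    by (rule qdim_mono[OF subspace_I]) (simp only: span_plus_span F_subset_prods[OF assms])
  with graded_dim_le_qdim[of n] show ?thesis by (rule order_trans)
qed

lemma growth_le_alg_dim: "growth n \<le> alg_dim I C"
proof -
  have "pspan (prods_upto mult (F 1) n) \<subseteq> C"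
    by (rule pm.span_minimal[OF prods_subset_C subspace_C])
  then have "pspan (prods_upto mult (F 1) n) \<subseteq> span_plus C I"
    using subset_span_plus[OF subspace_I] by blast
  then show ?thesis unfolding alg_dim_def by (rule qdim_mono[OF subspace_I])
qed

lemma gk_dim_eq: "gk_dim mult I (F 1) = limsup (\<lambda>n. logdim (growth n) / ereal (ln (real n)))"
  by (simp add: gk_dim_def)

lemma gk_dim_finite_dim:
  assumes "alg_dim I C = enat k"
  shows "gk_dim mult I (F 1) = 0"
  unfolding gk_dim_eq
  using limsup_logdim_over_ln_bounded[of growth k] growth_le_alg_dim assms by simp

lemma h_alg_finite: "\<exists>r \<ge> 0. h_alg I C F = ereal r"
  unfolding h_alg_def using limsup_logdim_over_n_finite[OF graded_dim_le_exp one_le_c one_le_\<beta>]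
  by (auto simp: zero_ereal_def)

lemma gk_dim_infinite_if_h_alg_pos:
  assumes "0 < h_alg I C F"
  shows "gk_dim mult I (F 1) = \<infinity>"
proof -
  have "0 < limsup (\<lambda>n. logdim (graded_dim I F n) / ereal (real n))"
    using assms by (simp add: h_alg_def split: if_splits)
  with graded_dim_le_growth show ?thesis
    unfolding gk_dim_eq by (rule limsup_logdim_over_ln_infinite[of "graded_dim I F" growth])
qed

theorem alg_type_trichotomy:
  "exactly_one3
     (\<exists>k::nat. alg_type mult I C F = (enat k, 0, 0))
     (\<exists>l::real. alg_type mult I C F = (\<infinity>, ereal l, 0))
     (\<exists>m::real. alg_type mult I C F = (\<infinity>, \<infinity>, ereal m))"
proof (cases "alg_dim I C")
  case (enat k)
  then have "alg_type mult I C F = (enat k, 0, 0)"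
    using gk_dim_finite_dim by (simp add: alg_type_def h_alg_def)
  then show ?thesis by (simp add: exactly_one3_def)
next
  case infinity
  obtain r where r: "0 \<le> r" "h_alg I C F = ereal r" using h_alg_finite by blast
  have gk_nonneg: "0 \<le> gk_dim mult I (F 1)"
    unfolding gk_dim_eq by (rule limsup_logdim_over_ln_nonneg)
  consider (entropy) "0 < r" | (finite_gk) l where "r = 0" "gk_dim mult I (F 1) = ereal l"
    | (infinite_gk) "r = 0" "gk_dim mult I (F 1) = \<infinity>"
    using r(1) gk_nonneg by (cases "gk_dim mult I (F 1)") force+
  then show ?thesis
  proof cases
    case entropy
    then have "gk_dim mult I (F 1) = \<infinity>" using r by (intro gk_dim_infinite_if_h_alg_pos) simp
    with infinity r show ?thesis by (simp add: alg_type_def exactly_one3_def)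
  qed (use infinity r in \<open>simp_all add: alg_type_def exactly_one3_def zero_ereal_def\<close>)
qed

end

section \<open>Bilinear products and paths\<close>

lemma lookup_pm_mult:
  "Poly_Mapping.lookup (pm_mult m p q) z = (\<Sum>u\<in>Poly_Mapping.keys p. \<Sum>w\<in>Poly_Mapping.keys q.
      (if m u w = Some z then Poly_Mapping.lookup p u * Poly_Mapping.lookup q w else 0))"
  unfolding pm_mult_def lookup_sum
  by (intro sum.cong refl) (auto split: option.split simp: lookup_single when_def)

lemma lookup_pm_mult_supset:
  assumes "finite U" "Poly_Mapping.keys p \<subseteq> U" "finite W" "Poly_Mapping.keys q \<subseteq> W"
  shows "Poly_Mapping.lookup (pm_mult m p q) z = (\<Sum>u\<in>U. \<Sum>w\<in>W.
      (if m u w = Some z then Poly_Mapping.lookup p u * Poly_Mapping.lookup q w else 0))"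
proof -
  have "Poly_Mapping.lookup (pm_mult m p q) z = (\<Sum>u\<in>U. \<Sum>w\<in>Poly_Mapping.keys q.
      (if m u w = Some z then Poly_Mapping.lookup p u * Poly_Mapping.lookup q w else 0))"
    unfolding lookup_pm_mult using assms
    by (intro sum.mono_neutral_left) (auto simp: in_keys_iff intro!: sum.neutral)
  also have "\<dots> = (\<Sum>u\<in>U. \<Sum>w\<in>W.
      (if m u w = Some z then Poly_Mapping.lookup p u * Poly_Mapping.lookup q w else 0))"
    using assms by (intro sum.cong refl sum.mono_neutral_left) (auto simp: in_keys_iff)
  finally show ?thesis .
qed

lemma pm_mult_add_left: "pm_mult m (p + p') q = pm_mult m p q + pm_mult m p' q"
proof (rule poly_mapping_eqI)
  fix z
  let ?U = "Poly_Mapping.keys p \<union> Poly_Mapping.keys p' \<union> Poly_Mapping.keys (p + p')"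
  show "Poly_Mapping.lookup (pm_mult m (p + p') q) z
      = Poly_Mapping.lookup (pm_mult m p q + pm_mult m p' q) z"
    unfolding lookup_add
    by (subst (1 2 3) lookup_pm_mult_supset[where U = ?U and W = "Poly_Mapping.keys q"])
       (auto simp: lookup_add sum.distrib[symmetric] algebra_simps intro!: sum.cong)
qed

lemma pm_mult_add_right: "pm_mult m p (q + q') = pm_mult m p q + pm_mult m p q'"
proof (rule poly_mapping_eqI)
  fix z
  let ?W = "Poly_Mapping.keys q \<union> Poly_Mapping.keys q' \<union> Poly_Mapping.keys (q + q')"
  show "Poly_Mapping.lookup (pm_mult m p (q + q')) z
      = Poly_Mapping.lookup (pm_mult m p q + pm_mult m p q') z"
    unfolding lookup_add
    by (subst (1 2 3) lookup_pm_mult_supset[where W = ?W and U = "Poly_Mapping.keys p"])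
       (auto simp: lookup_add sum.distrib[symmetric] algebra_simps intro!: sum.cong)
qed

lemma pm_mult_diff_left: "pm_mult m (p - p') q = pm_mult m p q - pm_mult m p' q"
  using pm_mult_add_left[of m "p - p'" p' q] by (simp add: eq_diff_eq)

lemma pm_mult_diff_right: "pm_mult m p (q - q') = pm_mult m p q - pm_mult m p q'"
  using pm_mult_add_right[of m p "q - q'" q'] by (simp add: eq_diff_eq)

lemma pm_mult_single:
  "pm_mult m (Poly_Mapping.single u a) (Poly_Mapping.single w b) =
     (case m u w of None \<Rightarrow> 0 | Some z \<Rightarrow> Poly_Mapping.single z (a * b))"
  by (cases "a = 0"; cases "b = 0") (auto simp: pm_mult_def split: option.split)

lemma keys_pm_mult:
  "Poly_Mapping.keys (pm_mult m p q) \<subseteq>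
     {z. \<exists>u\<in>Poly_Mapping.keys p. \<exists>w\<in>Poly_Mapping.keys q. m u w = Some z}"
  unfolding pm_mult_def
  by (rule order_trans[OF keys_sum], rule UN_least, rule order_trans[OF keys_sum])
     (auto split: option.splits if_splits; blast)

lemma in_span_singles_iff:
  "p \<in> pspan {Poly_Mapping.single w (1::'k::field) | w. P w} \<longleftrightarrow> Poly_Mapping.keys p \<subseteq> {w. P w}"
proof
  assume "p \<in> pspan {Poly_Mapping.single w (1::'k) | w. P w}"
  then show "Poly_Mapping.keys p \<subseteq> {w. P w}"
  proof (induction rule: pm.span_induct_alt)
    case (step c x y)
    have "Poly_Mapping.keys (pm_scale c x) \<subseteq> Poly_Mapping.keys x" by (auto simp: in_keys_iff)
    moreover have "Poly_Mapping.keys x \<subseteq> {w. P w}" using step by auto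
    ultimately show ?case using step keys_add[of "pm_scale c x" y] by blast
  qed simp
next
  assume keys: "Poly_Mapping.keys p \<subseteq> {w. P w}"
  have "p = (\<Sum>w\<in>Poly_Mapping.keys p. pm_scale (Poly_Mapping.lookup p w) (Poly_Mapping.single w 1))"
  proof (rule poly_mapping_eqI)
    fix k
    have "(\<Sum>w\<in>Poly_Mapping.keys p. Poly_Mapping.lookup p w * (if w = k then 1 else 0))
        = (\<Sum>w\<in>Poly_Mapping.keys p. if w = k then Poly_Mapping.lookup p k else 0)"
      by (intro sum.cong) auto
    then show "Poly_Mapping.lookup p k = Poly_Mapping.lookup
        (\<Sum>w\<in>Poly_Mapping.keys p. pm_scale (Poly_Mapping.lookup p w) (Poly_Mapping.single w 1)) k"
      by (simp add: lookup_sum lookup_single when_def in_keys_iff)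
  qed
  also have "\<dots> \<in> pspan {Poly_Mapping.single w (1::'k) | w. P w}"
    using keys by (intro pm.span_sum pm.span_scale pm.span_base) auto
  finally show "p \<in> pspan {Poly_Mapping.single w (1::'k) | w. P w}" .
qed

lemma pm_mult_in_span_singles:
  assumes "\<And>u w z. u \<in> Poly_Mapping.keys p \<Longrightarrow> w \<in> Poly_Mapping.keys q \<Longrightarrow> m u w = Some z \<Longrightarrow> P z"
  shows "pm_mult m p q \<in> pspan {Poly_Mapping.single w (1::'k::field) | w. P w}"
  unfolding in_span_singles_iff using keys_pm_mult[of m p q] assms by blast

lemma prods_upto_closed:
  assumes "\<And>x y. x \<in> C \<Longrightarrow> y \<in> C \<Longrightarrow> f x y \<in> C" "V \<subseteq> C"
  shows "prods_upto f V n \<subseteq> C"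
proof -
  have foldl_in: "foldl f a ys \<in> C" if "a \<in> C" "set ys \<subseteq> C" for a ys
    using that by (induction ys arbitrary: a) (auto intro: assms(1))
  show ?thesis unfolding prods_upto_def
  proof clarify
    fix xs assume "xs \<noteq> []" "set xs \<subseteq> V"
    then show "foldl f (hd xs) (tl xs) \<in> C" using foldl_in assms(2) by (cases xs) auto
  qed
qed

definition paths_upto :: "('v,'e) pre_digraph \<Rightarrow> nat \<Rightarrow> ('v,'e) path set" where
  "paths_upto G n = {p. is_path G p \<and> path_len p \<le> n}"

lemma edges_chain_append:
  "edges_chain G v (as @ bs) \<longleftrightarrow> edges_chain G v as \<and> edges_chain G (path_end G (v, as)) bs"
  by (induction as arbitrary: v) (simp_all add: path_end_def)

lemma edges_chain_arcs: "edges_chain G v es \<Longrightarrow> set es \<subseteq> arcs G"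
  by (induction es arbitrary: v) auto

lemma is_path_cat: "path_cat G p q = Some z \<Longrightarrow> is_path G z"
  by (cases p; cases q) (auto simp: path_cat_def is_path_def edges_chain_append split: if_splits)

lemma sum_powers_le_Suc_power: "(\<Sum>i\<le>n. (a::nat) ^ i) \<le> (a + 1) ^ n"
proof (induction n)
  case (Suc n)
  have "a * a ^ n \<le> a * (a + 1) ^ n" by (intro mult_left_mono power_mono) auto
  from add_mono[OF Suc.IH this] show ?case by simp
qed simp

lemma
  assumes "fin_digraph G"
  shows finite_paths_upto: "finite (paths_upto G n)"
    and card_paths_upto_le: "card (paths_upto G n) \<le> card (verts G) * (card (arcs G) + 1) ^ n"
proof -
  interpret fin_digraph G by fact
  let ?L = "{es. set es \<subseteq> arcs G \<and> length es \<le> n}"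
  have sub: "paths_upto G n \<subseteq> verts G \<times> ?L"
    using edges_chain_arcs[of G] by (fastforce simp: paths_upto_def is_path_def path_len_def)
  have fin: "finite (verts G \<times> ?L)" by (simp add: finite_lists_length_le)
  then show "finite (paths_upto G n)" using sub by (rule finite_subset[rotated])
  have "card (paths_upto G n) \<le> card (verts G) * (\<Sum>i\<le>n. card (arcs G) ^ i)"
    using card_mono[OF fin sub] by (simp add: card_cartesian_product card_lists_length_le)
  also have "\<dots> \<le> card (verts G) * (card (arcs G) + 1) ^ n"
    by (intro mult_left_mono sum_powers_le_Suc_power) simp
  finally show "card (paths_upto G n) \<le> card (verts G) * (card (arcs G) + 1) ^ n" .
qed

section \<open>The path algebra\<close>

lemma KE_mult_single_edge:
  assumes "wf_digraph G" "is_path G (v, es)" "e \<in> arcs G" "tail G e = path_end G (v, es)"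
  shows "KE_mult G (Poly_Mapping.single (v, es) (1::'k::field)) (Poly_Mapping.single (tail G e, [e]) 1)
       = Poly_Mapping.single (v, es @ [e]) 1"
proof -
  have "is_path G (tail G e, [e])"
    using assms(1,3) by (simp add: is_path_def wf_digraph.tail_in_verts)
  with assms have "path_cat G (v, es) (tail G e, [e]) = Some (v, es @ [e])"
    by (simp add: path_cat_def)
  then show ?thesis by (simp add: KE_mult_def pm_mult_single)
qed

lemma foldl_KE_mult_edges:
  assumes "wf_digraph G" "is_path G (v, es)" "edges_chain G (path_end G (v, es)) fs"
  shows "foldl (KE_mult G) (Poly_Mapping.single (v, es) (1::'k::field))
      (map (\<lambda>e. Poly_Mapping.single (tail G e, [e]) 1) fs) = Poly_Mapping.single (v, es @ fs) 1"
  using assms(2,3)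
proof (induction fs arbitrary: es)
  case (Cons e fs)
  then have e: "e \<in> arcs G" "tail G e = path_end G (v, es)" by simp_all
  have "is_path G (v, es @ [e])" using Cons.prems by (simp add: is_path_def edges_chain_append)
  moreover have "edges_chain G (path_end G (v, es @ [e])) fs"
    using Cons.prems by (simp add: path_end_def)
  moreover have "KE_mult G (Poly_Mapping.single (v, es) (1::'k)) (Poly_Mapping.single (tail G e, [e]) 1)
      = Poly_Mapping.single (v, es @ [e]) 1"
    by (rule KE_mult_single_edge[OF assms(1) Cons.prems(1) e])
  ultimately show ?case using Cons.IH[of "es @ [e]"] by simp
qed simp

lemma single_path_in_KE_filt:
  "is_path G p \<Longrightarrow> path_len p \<le> n \<Longrightarrow> Poly_Mapping.single p (1::'k::field) \<in> KE_filt G n"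
  unfolding KE_filt_def by (rule pm.span_base) blast

lemma single_path_in_prods:
  assumes "wf_digraph G" "is_path G p" "path_len p \<le> n" "1 \<le> n"
  shows "Poly_Mapping.single p (1::'k::field) \<in> prods_upto (KE_mult G) (KE_filt G 1) n"
proof (cases p)
  case (Pair v es)
  show ?thesis
  proof (cases es)
    case Nil
    then show ?thesis
      using Pair assms single_path_in_KE_filt[OF assms(2), of 1] unfolding prods_upto_def
      by (intro CollectI exI[of _ "[Poly_Mapping.single p 1]"]) (simp add: path_len_def)
  next
    case (Cons e es')
    let ?xs = "map (\<lambda>e. Poly_Mapping.single (tail G e, [e]) (1::'k)) es"
    have e: "e \<in> arcs G" "tail G e = v" "edges_chain G (head G e) es'"
      using assms(2) Pair Cons by (auto simp: is_path_def)
    have "is_path G (v, [e])" using assms(2) Pair Cons by (auto simp: is_path_def)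
    then have "foldl (KE_mult G) (hd ?xs) (tl ?xs) = Poly_Mapping.single p 1"
      using foldl_KE_mult_edges[OF assms(1), of v "[e]" es'] e Pair Cons by (simp add: path_end_def)
    moreover have "set ?xs \<subseteq> KE_filt G 1"
      using assms(2) Pair edges_chain_arcs[of G v es] wf_digraph.tail_in_verts[OF assms(1)]
      by (auto simp: is_path_def path_len_def intro!: single_path_in_KE_filt)
    ultimately show ?thesis using assms(3) Pair Cons unfolding prods_upto_def
      by (intro CollectI exI[of _ ?xs]) (auto simp: path_len_def)
  qed
qed

lemma KE_filt_eq_span_paths_upto:
  "KE_filt G n = pspan ((\<lambda>p. Poly_Mapping.single p (1::'k::field)) ` paths_upto G n)"
  unfolding KE_filt_def paths_upto_def by (intro arg_cong[where f = pspan]) auto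

lemma path_alg_exp_bounded_filtration:
  assumes "fin_digraph G"
  shows "exp_bounded_filtration (KE_mult G) {0 :: ('v,'e) path \<Rightarrow>\<^sub>0 'k::field} (KE_carrier G) (KE_filt G)
    (\<lambda>n. (\<lambda>p. Poly_Mapping.single p 1) ` paths_upto G n) (max 1 (card (verts G))) (card (arcs G) + 1)"
proof
  interpret fin_digraph G by fact
  fix n :: nat
  show "pm.subspace {0 :: ('v,'e) path \<Rightarrow>\<^sub>0 'k}" using pm.subspace_span[of "{}"] by simp
  show "pm.subspace (KE_carrier G :: (('v,'e) path \<Rightarrow>\<^sub>0 'k) set)" by (simp add: KE_carrier_def)
  show "KE_filt G n = pspan ((\<lambda>p. Poly_Mapping.single p 1) ` paths_upto G n)"
    by (rule KE_filt_eq_span_paths_upto)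
  show "finite ((\<lambda>p. Poly_Mapping.single p (1::'k)) ` paths_upto G n)"
    using finite_paths_upto[OF assms] by simp
  have "card ((\<lambda>p. Poly_Mapping.single p (1::'k)) ` paths_upto G n) \<le> card (paths_upto G n)"
    by (rule card_image_le[OF finite_paths_upto[OF assms]])
  also have "\<dots> \<le> max 1 (card (verts G)) * (card (arcs G) + 1) ^ n"
    using card_paths_upto_le[OF assms, of n] by (simp add: order_trans)
  finally show "card ((\<lambda>p. Poly_Mapping.single p (1::'k)) ` paths_upto G n)
      \<le> max 1 (card (verts G)) * (card (arcs G) + 1) ^ n" .
  show "1 \<le> max 1 (card (verts G))" "1 \<le> card (arcs G) + 1" by simp_all
  have "KE_mult G x y \<in> KE_carrier G" for x y :: "('v,'e) path \<Rightarrow>\<^sub>0 'k"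
    unfolding KE_mult_def KE_carrier_def by (rule pm_mult_in_span_singles) (auto intro: is_path_cat)
  moreover have "KE_filt G 1 \<subseteq> (KE_carrier G :: (('v,'e) path \<Rightarrow>\<^sub>0 'k) set)"
    unfolding KE_filt_def KE_carrier_def by (rule pm.span_mono) blast
  ultimately show "prods_upto (KE_mult G) (KE_filt G 1) n \<subseteq> (KE_carrier G :: (('v,'e) path \<Rightarrow>\<^sub>0 'k) set)"
    by (rule prods_upto_closed)
  assume "1 \<le> n"
  have "KE_filt G n \<subseteq> pspan (prods_upto (KE_mult G) (KE_filt G 1) n :: (('v,'e) path \<Rightarrow>\<^sub>0 'k) set)"
    unfolding KE_filt_eq_span_paths_upto[of G n] paths_upto_def
    by (intro pm.span_mono image_subsetI single_path_in_prods[OF wf_digraph_axioms _ _ \<open>1 \<le> n\<close>]) simp_all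
  also have "\<dots> \<subseteq> span_plus (prods_upto (KE_mult G) (KE_filt G 1) n) {0}"
    using subset_span_plus[OF \<open>pm.subspace {0}\<close>] span_plus_span by blast
  finally show "KE_filt G n
      \<subseteq> span_plus (prods_upto (KE_mult G) (KE_filt G 1) n) {0 :: ('v,'e) path \<Rightarrow>\<^sub>0 'k}" .
qed

section \<open>The Leavitt path algebra\<close>

type_synonym ('v, 'e, 'k) fa_elem = "('v, 'e) gen list \<Rightarrow>\<^sub>0 'k"

lemma FA_mult_wd: "FA_mult (wd a) (wd b) = (wd (a @ b) :: ('v, 'e, 'k::field) fa_elem)"
  by (simp add: FA_mult_def wd_def pm_mult_single)

lemma foldl_FA_mult_wd:
  "foldl FA_mult (wd a) (map wd ws) = (wd (a @ concat ws) :: ('v, 'e, 'k::field) fa_elem)"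
  by (induction ws arbitrary: a) (simp_all add: FA_mult_wd)

lemma wd_concat_in_prods_upto:
  assumes "ws \<noteq> []" "length ws \<le> n" "\<And>w. w \<in> set ws \<Longrightarrow> (wd w :: ('v, 'e, 'k::field) fa_elem) \<in> V"
  shows "(wd (concat ws) :: ('v, 'e, 'k) fa_elem) \<in> prods_upto FA_mult V n"
proof -
  obtain w ws' where "ws = w # ws'" using assms(1) by (cases ws) auto
  then have "foldl FA_mult (hd (map wd ws)) (tl (map wd ws)) = (wd (concat ws) :: ('v, 'e, 'k) fa_elem)"
    by (simp add: foldl_FA_mult_wd)
  then show ?thesis unfolding prods_upto_def using assms
    by (intro CollectI exI[of _ "map wd ws"]) auto
qed

definition valid_word :: "('v,'e) pre_digraph \<Rightarrow> ('v,'e) gen list \<Rightarrow> bool" where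
  "valid_word G u \<longleftrightarrow> (\<forall>g\<in>set u. valid_gen G g)"

lemma valid_word_simps [simp]:
  "valid_word G []"
  "valid_word G (g # w) \<longleftrightarrow> valid_gen G g \<and> valid_word G w"
  "valid_word G (u @ w) \<longleftrightarrow> valid_word G u \<and> valid_word G w"
  by (auto simp: valid_word_def)

lemma valid_word_map_GE: "set es \<subseteq> arcs G \<Longrightarrow> valid_word G (map GE es)"
  by (auto simp: valid_word_def valid_gen_def)

lemma valid_path_word: "is_path G p \<Longrightarrow> valid_word G (path_word p) \<and> path_word p \<noteq> []"
  by (cases p) (auto simp: path_word_def is_path_def valid_word_def valid_gen_def dest!: edges_chain_arcs)

lemma valid_ghost_word: "is_path G p \<Longrightarrow> valid_word G (ghost_word p) \<and> ghost_word p \<noteq> []"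
  by (cases p) (auto simp: ghost_word_def is_path_def valid_word_def valid_gen_def dest!: edges_chain_arcs)

lemma subspace_LPA_ideal: "pm.subspace (LPA_ideal G :: ('v, 'e, 'k::field) fa_elem set)"
  by (simp add: LPA_ideal_def)

lemma diff_in_subspace_trans:
  "pm.subspace I \<Longrightarrow> x - y \<in> I \<Longrightarrow> y - z \<in> I \<Longrightarrow> x - z \<in> I"
  using pm.subspace_add[of I "x - y" "y - z"] by simp

lemma relation_in_LPA_ideal:
  assumes "valid_word G u" "valid_word G w" "wd x - wd y \<in> (LPA_rels G :: ('v, 'e, 'k::field) fa_elem set)"
  shows "wd (u @ x @ w) - wd (u @ y @ w) \<in> (LPA_ideal G :: ('v, 'e, 'k) fa_elem set)"
proof -
  have "FA_mult (FA_mult (wd u) (wd x - wd y)) (wd w) \<in> (LPA_ideal G :: ('v, 'e, 'k) fa_elem set)"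
    unfolding LPA_ideal_def using assms by (intro pm.span_base) (auto simp: valid_word_def)
  moreover have "FA_mult (FA_mult (wd u) (wd x - wd y)) (wd w)
      = (wd (u @ x @ w) - wd (u @ y @ w) :: ('v, 'e, 'k) fa_elem)"
    unfolding FA_mult_def pm_mult_diff_right pm_mult_diff_left
    by (simp add: FA_mult_wd[unfolded FA_mult_def])
  ultimately show ?thesis by simp
qed

lemma edge_range_congr:
  assumes "valid_word G u" "valid_word G w" "e \<in> arcs G"
  shows "wd (u @ [GE e, GV (head G e)] @ w) - wd (u @ [GE e] @ w)
    \<in> (LPA_ideal G :: ('v, 'e, 'k::field) fa_elem set)"
proof (rule relation_in_LPA_ideal[OF assms(1,2)])
  show "wd [GE e, GV (head G e)] - wd [GE e] \<in> (LPA_rels G :: ('v, 'e, 'k) fa_elem set)"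
    unfolding LPA_rels_def
    by (rule UnI1, rule UnI1, rule UnI1, rule UnI1, rule UnI2) (use assms(3) in blast)
qed

lemma ghost_range_congr:
  assumes "valid_word G u" "valid_word G w" "f \<in> arcs G"
  shows "wd (u @ [GV (head G f), GG f] @ w) - wd (u @ [GG f] @ w)
    \<in> (LPA_ideal G :: ('v, 'e, 'k::field) fa_elem set)"
proof (rule relation_in_LPA_ideal[OF assms(1,2)])
  show "wd [GV (head G f), GG f] - wd [GG f] \<in> (LPA_rels G :: ('v, 'e, 'k) fa_elem set)"
    unfolding LPA_rels_def
    by (rule UnI1, rule UnI1, rule UnI1, rule UnI2) (use assms(3) in blast)
qed

definition padded_edges :: "('v,'e) pre_digraph \<Rightarrow> 'e list \<Rightarrow> ('v,'e) gen list" where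
  "padded_edges G es = concat (map (\<lambda>e. [GE e, GV (head G e)]) es)"

definition padded_ghosts :: "('v,'e) pre_digraph \<Rightarrow> 'e list \<Rightarrow> ('v,'e) gen list" where
  "padded_ghosts G fs = concat (map (\<lambda>f. [GV (head G f), GG f]) fs)"

lemma valid_padded_edges: "wf_digraph G \<Longrightarrow> set es \<subseteq> arcs G \<Longrightarrow> valid_word G (padded_edges G es)"
  by (induction es) (auto simp: padded_edges_def valid_gen_def wf_digraph.head_in_verts)

lemma valid_padded_ghosts: "wf_digraph G \<Longrightarrow> set fs \<subseteq> arcs G \<Longrightarrow> valid_word G (padded_ghosts G fs)"
  by (induction fs) (auto simp: padded_ghosts_def valid_gen_def wf_digraph.head_in_verts)

lemma padded_edges_congr:
  assumes "wf_digraph G" "set es \<subseteq> arcs G" "valid_word G u" "valid_word G w"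
  shows "wd (u @ padded_edges G es @ w) - wd (u @ map GE es @ w)
    \<in> (LPA_ideal G :: ('v, 'e, 'k::field) fa_elem set)"
  using assms(2,3)
proof (induction es arbitrary: u)
  case Nil
  then show ?case using pm.subspace_0[OF subspace_LPA_ideal] by (simp add: padded_edges_def)
next
  case (Cons e es)
  have "wd (u @ [GE e, GV (head G e)] @ padded_edges G es @ w) - wd (u @ [GE e] @ padded_edges G es @ w)
      \<in> (LPA_ideal G :: ('v, 'e, 'k) fa_elem set)"
    using Cons.prems valid_padded_edges[OF assms(1)] assms(4) by (intro edge_range_congr) auto
  moreover have "wd ((u @ [GE e]) @ padded_edges G es @ w) - wd ((u @ [GE e]) @ map GE es @ w)
      \<in> (LPA_ideal G :: ('v, 'e, 'k) fa_elem set)"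
    using Cons.prems by (intro Cons.IH) (auto simp: valid_gen_def)
  ultimately show ?case
    by (simp add: padded_edges_def diff_in_subspace_trans[OF subspace_LPA_ideal])
qed

lemma padded_ghosts_congr:
  assumes "wf_digraph G" "set fs \<subseteq> arcs G" "valid_word G u" "valid_word G w"
  shows "wd (u @ padded_ghosts G fs @ w) - wd (u @ map GG fs @ w)
    \<in> (LPA_ideal G :: ('v, 'e, 'k::field) fa_elem set)"
  using assms(2,3)
proof (induction fs arbitrary: u)
  case Nil
  then show ?case using pm.subspace_0[OF subspace_LPA_ideal] by (simp add: padded_ghosts_def)
next
  case (Cons f fs)
  have "wd (u @ [GV (head G f), GG f] @ padded_ghosts G fs @ w) - wd (u @ [GG f] @ padded_ghosts G fs @ w)
      \<in> (LPA_ideal G :: ('v, 'e, 'k) fa_elem set)"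
    using Cons.prems valid_padded_ghosts[OF assms(1)] assms(4) by (intro ghost_range_congr) auto
  moreover have "wd ((u @ [GG f]) @ padded_ghosts G fs @ w) - wd ((u @ [GG f]) @ map GG fs @ w)
      \<in> (LPA_ideal G :: ('v, 'e, 'k) fa_elem set)"
    using Cons.prems by (intro Cons.IH) (auto simp: valid_gen_def)
  ultimately show ?case
    by (simp add: padded_ghosts_def diff_in_subspace_trans[OF subspace_LPA_ideal])
qed

lemma padded_congr:
  assumes "wf_digraph G" "set es \<subseteq> arcs G" "set fs \<subseteq> arcs G" "valid_word G u" "valid_word G w"
  shows "wd (u @ padded_edges G es @ padded_ghosts G fs @ w) - wd (u @ map GE es @ map GG fs @ w)
    \<in> (LPA_ideal G :: ('v, 'e, 'k::field) fa_elem set)"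
proof -
  have "wd (u @ padded_edges G es @ padded_ghosts G fs @ w) - wd (u @ map GE es @ padded_ghosts G fs @ w)
      \<in> (LPA_ideal G :: ('v, 'e, 'k) fa_elem set)"
    using assms valid_padded_ghosts by (intro padded_edges_congr) auto
  moreover have "wd ((u @ map GE es) @ padded_ghosts G fs @ w) - wd ((u @ map GE es) @ map GG fs @ w)
      \<in> (LPA_ideal G :: ('v, 'e, 'k) fa_elem set)"
    using assms valid_word_map_GE by (intro padded_ghosts_congr) auto
  ultimately show ?thesis by (simp add: diff_in_subspace_trans[OF subspace_LPA_ideal])
qed

lemma monomial_in_LPA_filt:
  assumes "is_path G p" "is_path G q" "path_len p + path_len q \<le> n"
  shows "(wd (path_word p @ ghost_word q) :: ('v, 'e, 'k::field) fa_elem) \<in> LPA_filt G n"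
  unfolding LPA_filt_def FA_mult_wd[symmetric] using assms by (intro pm.span_base) blast

lemma edge_vertex_in_LPA_filt_1:
  assumes "wf_digraph G" "e \<in> arcs G" "x \<in> verts G"
  shows "(wd [GE e, GV x] :: ('v, 'e, 'k::field) fa_elem) \<in> LPA_filt G 1"
  using monomial_in_LPA_filt[of G "(tail G e, [e])" "(x, [])" 1] assms
  by (simp add: is_path_def path_len_def path_word_def ghost_word_def wf_digraph.tail_in_verts)

lemma vertex_ghost_in_LPA_filt_1:
  assumes "wf_digraph G" "f \<in> arcs G" "x \<in> verts G"
  shows "(wd [GV x, GG f] :: ('v, 'e, 'k::field) fa_elem) \<in> LPA_filt G 1"
  using monomial_in_LPA_filt[of G "(x, [])" "(tail G f, [f])" 1] assms
  by (simp add: is_path_def path_len_def path_word_def ghost_word_def wf_digraph.tail_in_verts)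

lemma in_span_plus_prods_if_congr:
  fixes I V :: "('v, 'e, 'k::field) fa_elem set"
  assumes "pm.subspace I" "ws \<noteq> []" "length ws \<le> n" "\<And>w. w \<in> set ws \<Longrightarrow> wd w \<in> V"
    and "wd (concat ws) - wd T \<in> I"
  shows "wd T \<in> span_plus (prods_upto FA_mult V n) I"
proof -
  have "wd (concat ws) \<in> pspan (prods_upto FA_mult V n)"
    using assms(2-4) by (intro pm.span_base wd_concat_in_prods_upto)
  moreover have "- (wd (concat ws) - wd T) \<in> I" using assms(1,5) by (rule pm.subspace_neg)
  ultimately show ?thesis unfolding span_plus_def by force
qed

text \<open>Modulo the relations e = e r(e) and f* = r(f) f*, a monomial lambda mu* with
  l(lambda) + l(mu) = k > 0 is a product of k elements of F_1; a vertex standing for an empty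
  lambda or mu is absorbed into the neighbouring factor.\<close>
lemma monomial_in_span_plus_prods:
  assumes wf: "wf_digraph G" and p: "is_path G (v, es)" and q: "is_path G (x, fs)"
    and len: "length es + length fs \<le> n" and "1 \<le> n"
  shows "(wd (path_word (v, es) @ ghost_word (x, fs)) :: ('v, 'e, 'k::field) fa_elem)
     \<in> span_plus (prods_upto FA_mult (LPA_filt G 1) n) (LPA_ideal G)"
proof -
  note congr = in_span_plus_prods_if_congr[OF subspace_LPA_ideal]
  note head = wf_digraph.head_in_verts[OF wf]
  have es: "set es \<subseteq> arcs G" "v \<in> verts G" and fs: "set fs \<subseteq> arcs G" "x \<in> verts G"
    using p q by (auto simp: is_path_def dest: edges_chain_arcs)
  have F1: "wd [GE e, GV y] \<in> (LPA_filt G 1 :: ('v, 'e, 'k) fa_elem set)"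
    "wd [GV y, GG e] \<in> (LPA_filt G 1 :: ('v, 'e, 'k) fa_elem set)"
    if "e \<in> arcs G" "y \<in> verts G" for e y
    using that edge_vertex_in_LPA_filt_1[OF wf] vertex_ghost_in_LPA_filt_1[OF wf] by blast+
  consider (vertices) "es = []" "fs = []" | (ghosts) f fs' where "es = []" "rev fs = f # fs'"
    | (edges) es' e where "es = es' @ [e]" "fs = []" | (both) "es \<noteq> []" "fs \<noteq> []"
    by (cases es rule: rev_cases; cases "rev fs") auto
  then show ?thesis
  proof cases
    case vertices
    then have "wd (path_word (v, es) @ ghost_word (x, fs)) \<in> (LPA_filt G 1 :: ('v, 'e, 'k) fa_elem set)"
      using monomial_in_LPA_filt[OF p q] by (simp add: path_len_def)
    then show ?thesis using \<open>1 \<le> n\<close>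
      by (intro congr[of "[path_word (v, es) @ ghost_word (x, fs)]"])
        (simp_all add: pm.subspace_0[OF subspace_LPA_ideal])
  next
    case (ghosts f fs')
    then have f: "f \<in> arcs G" "set fs' \<subseteq> arcs G"
      using fs(1) by (metis list.set_intros set_rev subset_code(1))+
    let ?ws = "[GV v, GG f] # map (\<lambda>f. [GV (head G f), GG f]) fs'"
    have "wd (concat ?ws) - wd (path_word (v, es) @ ghost_word (x, fs)) \<in> LPA_ideal G"
      using padded_congr[OF wf _ f(2), of "[]" "[GV v, GG f]" "[]"] es f ghosts
      by (simp add: padded_edges_def padded_ghosts_def path_word_def ghost_word_def valid_gen_def)
    then show ?thesis
      using ghosts len f es
      by (intro congr[of ?ws]) (use F1 head in \<open>auto dest: arg_cong[of _ _ length]\<close>)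
  next
    case (edges es' e)
    then have e: "e \<in> arcs G" "set es' \<subseteq> arcs G" using es(1) by auto
    let ?ws = "map (\<lambda>e. [GE e, GV (head G e)]) es' @ [[GE e, GV x]]"
    have "wd (concat ?ws) - wd (path_word (v, es) @ ghost_word (x, fs)) \<in> LPA_ideal G"
      using padded_congr[OF wf e(2), of "[]" "[]" "[GE e, GV x]"] fs e edges
      by (simp add: padded_edges_def padded_ghosts_def path_word_def ghost_word_def valid_gen_def)
    then show ?thesis using edges len e fs by (intro congr[of ?ws]) (use F1 head in auto)
  next
    case both
    let ?ws = "map (\<lambda>e. [GE e, GV (head G e)]) es @ map (\<lambda>f. [GV (head G f), GG f]) (rev fs)"
    have "wd (concat ?ws) - wd (path_word (v, es) @ ghost_word (x, fs)) \<in> LPA_ideal G"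
      using padded_congr[OF wf es(1), of "rev fs" "[]" "[]"] fs both
      by (simp add: padded_edges_def padded_ghosts_def path_word_def ghost_word_def)
    then show ?thesis using both len es fs by (intro congr[of ?ws]) (use F1 head in auto)
  qed
qed

lemma FA_carrier_iff:
  "x \<in> FA_carrier G \<longleftrightarrow> Poly_Mapping.keys x \<subseteq> {w. w \<noteq> [] \<and> valid_word G w}"
  unfolding FA_carrier_def wd_def valid_word_def by (rule in_span_singles_iff)

lemma FA_mult_in_FA_carrier:
  assumes "x \<in> FA_carrier G" "y \<in> FA_carrier G"
  shows "FA_mult x y \<in> FA_carrier G"
  using keys_pm_mult[of "\<lambda>u w. Some (u @ w)" x y] assms unfolding FA_carrier_iff FA_mult_def
  by fastforce

lemma wd_in_FA_carrier: "w \<noteq> [] \<Longrightarrow> valid_word G w \<Longrightarrow> wd w \<in> FA_carrier G"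
  by (simp add: FA_carrier_iff wd_def)

lemma LPA_filt_subset_FA_carrier: "LPA_filt G n \<subseteq> FA_carrier G"
  unfolding LPA_filt_def
proof (rule pm.span_minimal)
  show "pm.subspace (FA_carrier G)" by (simp add: FA_carrier_def)
  show "{FA_mult (wd (path_word p)) (wd (ghost_word q)) | p q.
      is_path G p \<and> is_path G q \<and> path_len p + path_len q \<le> n} \<subseteq> FA_carrier G"
  proof clarify
    fix p q assume "is_path G p" "is_path G q"
    then show "FA_mult (wd (path_word p)) (wd (ghost_word q)) \<in> FA_carrier G"
      using valid_path_word[of G p] valid_ghost_word[of G q]
      by (simp add: FA_mult_wd wd_in_FA_carrier)
  qed
qed

lemma leavitt_exp_bounded_filtration:
  assumes "fin_digraph G"
  shows "exp_bounded_filtration FA_mult (LPA_ideal G :: ('v, 'e, 'k::field) fa_elem set)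
    (FA_carrier G) (LPA_filt G)
    (\<lambda>n. {FA_mult (wd (path_word p)) (wd (ghost_word q)) | p q.
       is_path G p \<and> is_path G q \<and> path_len p + path_len q \<le> n})
    (max 1 (card (verts G) ^ 2)) ((card (arcs G) + 1) ^ 2)"
proof
  interpret fin_digraph G by fact
  fix n :: nat
  let ?X = "{FA_mult (wd (path_word p)) (wd (ghost_word q)) | p q.
     is_path G p \<and> is_path G q \<and> path_len p + path_len q \<le> n} :: ('v, 'e, 'k) fa_elem set"
  let ?P = "paths_upto G n"
  show "pm.subspace (LPA_ideal G :: ('v, 'e, 'k) fa_elem set)" by (rule subspace_LPA_ideal)
  show "pm.subspace (FA_carrier G :: ('v, 'e, 'k) fa_elem set)" by (simp add: FA_carrier_def)
  have filt_eq: "LPA_filt G n = pspan ?X" by (simp add: LPA_filt_def)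
  then show "LPA_filt G n = pspan ?X" .
  have X_sub: "?X \<subseteq> (\<lambda>(p, q). FA_mult (wd (path_word p)) (wd (ghost_word q))) ` (?P \<times> ?P)"
    by (auto simp: paths_upto_def)
  then show "finite ?X" by (rule finite_subset) (simp add: finite_paths_upto[OF assms])
  have "card ?X \<le> card (?P \<times> ?P)"
    using card_mono[OF _ X_sub] card_image_le finite_paths_upto[OF assms]
    by (metis (no_types, lifting) finite_SigmaI finite_imageI order_trans)
  also have "\<dots> \<le> (card (verts G) * (card (arcs G) + 1) ^ n) ^ 2"
    using card_paths_upto_le[OF assms, of n]
    by (simp add: card_cartesian_product power2_eq_square mult_mono)
  also have "\<dots> \<le> max 1 (card (verts G) ^ 2) * ((card (arcs G) + 1) ^ 2) ^ n"
    by (simp add: power_mult_distrib flip: power_mult) (simp add: mult.commute)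
  finally show "card ?X \<le> max 1 (card (verts G) ^ 2) * ((card (arcs G) + 1) ^ 2) ^ n" .
  show "1 \<le> max 1 (card (verts G) ^ 2)" "1 \<le> (card (arcs G) + 1) ^ 2" by simp_all
  show "prods_upto FA_mult (LPA_filt G 1) n \<subseteq> (FA_carrier G :: ('v, 'e, 'k) fa_elem set)"
    using FA_mult_in_FA_carrier LPA_filt_subset_FA_carrier by (rule prods_upto_closed)
  assume "1 \<le> n"
  show "LPA_filt G n \<subseteq> span_plus (prods_upto FA_mult (LPA_filt G 1) n)
      (LPA_ideal G :: ('v, 'e, 'k) fa_elem set)"
    unfolding filt_eq
  proof (rule pm.span_minimal)
    show "?X \<subseteq> span_plus (prods_upto FA_mult (LPA_filt G 1) n) (LPA_ideal G)"
      using monomial_in_span_plus_prods[OF wf_digraph_axioms _ _ _ \<open>1 \<le> n\<close>]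
      by (clarsimp simp: FA_mult_wd path_len_def)
  qed (rule subspace_span_plus[OF subspace_LPA_ideal])
qed

theorem path_alg_type_trichotomy:
  assumes "fin_digraph E"
  shows "exactly_one3
           (\<exists>k::nat. path_alg_type K E = (enat k, 0, 0))
           (\<exists>l::real. path_alg_type K E = (\<infinity>, ereal l, 0))
           (\<exists>m::real. path_alg_type K E = (\<infinity>, \<infinity>, ereal m))"
  unfolding path_alg_type_def
  by (rule exp_bounded_filtration.alg_type_trichotomy[OF path_alg_exp_bounded_filtration[OF assms]])

theorem leavitt_type_trichotomy:
  assumes "fin_digraph E"
  shows "exactly_one3
           (\<exists>k::nat. leavitt_type K E = (enat k, 0, 0))
           (\<exists>l::real. leavitt_type K E = (\<infinity>, ereal l, 0))
           (\<exists>m::real. leavitt_type K E = (\<infinity>, \<infinity>, ereal m))"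
  unfolding leavitt_type_def
  by (rule exp_bounded_filtration.alg_type_trichotomy[OF leavitt_exp_bounded_filtration[OF assms]])

theorem corollary5p17:
  fixes E :: "('v,'e) pre_digraph" and K :: "'k::field itself"
    and t :: "enat \<times> ereal \<times> ereal"
  assumes "fin_digraph E"
    and "t = path_alg_type K E \<or> t = leavitt_type K E"
  shows "exactly_one3
           (\<exists>k::nat. t = (enat k, 0, 0))
           (\<exists>l::real. t = (\<infinity>, ereal l, 0))
           (\<exists>m::real. t = (\<infinity>, \<infinity>, ereal m))"
  using assms(2) path_alg_type_trichotomy[OF assms(1)] leavitt_type_trichotomy[OF assms(1)] by blast

end
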